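(* Let $\mathcal{G}=(\mathbf{V},\mathbf{E})$ be the directed mixed graph (DMG) of a simple structural causal model (SCM) whose distribution is $\sigma$-faithful to $\mathcal{G}$. Let $\mathbf{S}\subseteq\mathbf{V}$ be the set of selection bias variables, and let $V,W,X,Y\in\mathbf{V}\setminus\mathbf{S}$ be four distinct variables. Suppose that $$V \perp\!\!\!\perp Y \mid \mathbf{S}\cup[\{X\}] \qquad\text{and}\qquad V \not\perp\!\!\!\perp W \mid \mathbf{S}\cup[\{X\}],$$ i.e. (i) $V \perp\!\!\!\perp Y \mid \{X\}\cup\mathbf{S}$ and $V\not\perp\!\!\!\perp Y\mid \mathbf{S}$, and (ii) $V\not\perp\!\!\!\perp W\mid\{X\}\cup\mathbf{S}$ and $V\perp\!\!\!\perp W\mid\mathbf{S}$. Then $X\in\mathrm{an}(Y)$, $Y\notin\mathrm{an}(X)$, $X\notin\mathrm{an}(\mathbf{S})$, and $X$ and $Y$ are unconfounded (there is no bidirected edge $X\leftrightarrow Y$ in $\mathcal{G}$).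
   Context: A directed mixed graph (DMG) $\mathcal{G}=(\mathbf{V},\mathbf{E})$ has nodes $\mathbf{V}$ (random variables) and edges that are directed ($\to$) or bidirected ($\leftrightarrow$) between distinct nodes; cycles are allowed. Directed edges represent direct causal relations, bidirected edges represent latent confounding. $X$ is an ancestor of $Y$ ($X\in\mathrm{an}(Y)$) if there is a directed path from $X$ to $Y$ (every node is its own ancestor); for a set, $\mathrm{an}(\mathbf{X})=\bigcup_{X\in\mathbf{X}}\mathrm{an}(X)$. The strongly connected component of $X$ is $\mathrm{an}(X)\cap\mathrm{de}(X)$. A collider on a walk is a node $X$ with both adjacent edge marks being arrowheads into $X$. A walk between $X$ and $Y$ is $\sigma$-blocked by $\mathbf{C}\subseteq\mathbf{V}$ if $X$ or $Y$ is in $\mathbf{C}$, or the walk contains a collider not in $\mathrm{an}(\mathbf{C})$, or it contains a non-collider in $\mathbf{C}$ that points (with a directed edge) to an adjacent node on the walk lying in a different strongly connected component; $X$ and $Y$ are $\sigma$-separated by $\mathbf{C}$ if every walk between them is $\sigma$-blocked. A simple SCM is one whose DMG satisfies the $\sigma$-separation Markov property (σ-separation implies conditional independence); $\sigma$-faithfulness means conversely that every conditional independence in the distribution corresponds to a $\sigma$-separation, so conditional independences coincide exactly with $\sigma$-separations. Selection bias variables $\mathbf{S}$ are unobserved variables of the model on which the data are implicitly conditioned (samples are included depending on $\mathbf{S}$). Notation for disjoint sets $\{X\},\{Y\},\mathbf{W},\mathbf{Z}$: the minimal conditional independence $X\perp\!\!\!\perp Y\mid \mathbf{W}\cup[\mathbf{Z}]$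 means $X\perp\!\!\!\perp Y\mid\mathbf{W}\cup\mathbf{Z}$ and $X\not\perp\!\!\!\perp Y\mid\mathbf{W}\cup\mathbf{Z}'$ for every proper subset $\mathbf{Z}'\subsetneq\mathbf{Z}$; the minimal conditional dependence $X\not\perp\!\!\!\perp Y\mid\mathbf{W}\cup[\mathbf{Z}]$ means $X\not\perp\!\!\!\perp Y\mid\mathbf{W}\cup\mathbf{Z}$ and $X\perp\!\!\!\perp Y\mid\mathbf{W}\cup\mathbf{Z}'$ for every $\mathbf{Z}'\subsetneq\mathbf{Z}$. *)

theory Defs
  imports Main
begin

text \<open>A directed mixed graph (DMG) on vertex set Vs: directed edges Ds (pair (a,b) means a \<rightarrow> b),
  bidirected edges Bs (symmetric; (a,b) means a \<leftrightarrow> b).\<close>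

definition dmg :: "'v set \<Rightarrow> ('v \<times> 'v) set \<Rightarrow> ('v \<times> 'v) set \<Rightarrow> bool" where
  "dmg Vs Ds Bs \<longleftrightarrow> finite Vs \<and> Ds \<subseteq> Vs \<times> Vs \<and> Bs \<subseteq> Vs \<times> Vs \<and> sym Bs
     \<and> (\<forall>a. (a,a) \<notin> Ds) \<and> (\<forall>a. (a,a) \<notin> Bs)"

definition anc :: "('v \<times> 'v) set \<Rightarrow> 'v set \<Rightarrow> 'v set" where
  "anc Ds A = {a. \<exists>b\<in>A. (a,b) \<in> Ds\<^sup>*}"

definition same_scc :: "('v \<times> 'v) set \<Rightarrow> 'v \<Rightarrow> 'v \<Rightarrow> bool" where
  "same_scc Ds a b \<longleftrightarrow> (a,b) \<in> Ds\<^sup>* \<and> (b,a) \<in> Ds\<^sup>*"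

text \<open>Kind of the edge used in a walk step from node a to the next node b:
  Fwd: a \<rightarrow> b, Bwd: a \<leftarrow> b, Bid: a \<leftrightarrow> b.\<close>

datatype ekind = Fwd | Bwd | Bid

definition is_walk :: "('v \<times> 'v) set \<Rightarrow> ('v \<times> 'v) set \<Rightarrow> 'v list \<Rightarrow> ekind list \<Rightarrow> bool" where
  "is_walk Ds Bs ns ks \<longleftrightarrow> length ns = Suc (length ks) \<and>
     (\<forall>i < length ks. (case ks!i of
         Fwd \<Rightarrow> (ns!i, ns!Suc i) \<in> Ds
       | Bwd \<Rightarrow> (ns!Suc i, ns!i) \<in> Ds
       | Bid \<Rightarrow> (ns!i, ns!Suc i) \<in> Bs))"

definition collider :: "ekind list \<Rightarrow> nat \<Rightarrow> bool" where
  "collider ks i \<longleftrightarrow> 0 < i \<and> i < length ks \<and> ks!(i - 1) \<in> {Fwd, Bid} \<and> ks!i \<in> {Bwd, Bid}"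

definition sigma_blocked :: "('v \<times> 'v) set \<Rightarrow> 'v set \<Rightarrow> 'v list \<Rightarrow> ekind list \<Rightarrow> bool" where
  "sigma_blocked Ds C ns ks \<longleftrightarrow>
     hd ns \<in> C \<or> last ns \<in> C \<or>
     (\<exists>i. collider ks i \<and> ns!i \<notin> anc Ds C) \<or>
     (\<exists>i < length ns. \<not> collider ks i \<and> ns!i \<in> C \<and>
        ((i < length ks \<and> ks!i = Fwd \<and> \<not> same_scc Ds (ns!i) (ns!Suc i)) \<or>
         (0 < i \<and> ks!(i - 1) = Bwd \<and> \<not> same_scc Ds (ns!i) (ns!(i - 1)))))"

definition sigma_sep :: "('v \<times> 'v) set \<Rightarrow> ('v \<times> 'v) set \<Rightarrow> 'v \<Rightarrow> 'v \<Rightarrow> 'v set \<Rightarrow> bool" where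
  "sigma_sep Ds Bs x y C \<longleftrightarrow>
     (\<forall>ns ks. is_walk Ds Bs ns ks \<and> hd ns = x \<and> last ns = y \<longrightarrow> sigma_blocked Ds C ns ks)"

end

theory Submission
  imports Defs
begin

text \<open>Faithfulness turns the four (in)dependences into statements about \<sigma>-separation.
  Since V and W are \<sigma>-separated by S but not by S \<union> {X}, conditioning on X opens some walk
  between them; its last collider c outside an(S) is an ancestor of X. Hence X \<notin> an(S), and also
  X \<notin> an(V): otherwise the directed path from c back to V could replace the part of the walk
  before c, giving a walk from V to W that is open given S.

  A walk from V to Y that is open given S is blocked given S \<union> {X}, so it visits X, and since
  X \<notin> an(V \<union> S) it enters X with an arrowhead at its first visit. Continuing from there with
  the part of the walk after its last visit to X (if X \<notin> an(Y)), with a directed path from X to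
  Y inside the strongly connected component of X (if Y \<in> an(X)), or with an edge X \<leftrightarrow> Y
  yields a walk from V to Y that is open given S \<union> {X}, contradicting the separation.\<close>

section \<open>Walks\<close>

definition walk_edge :: "('v \<times> 'v) set \<Rightarrow> ('v \<times> 'v) set \<Rightarrow> ekind \<Rightarrow> 'v \<Rightarrow> 'v \<Rightarrow> bool" where
  "walk_edge Ds Bs k a b \<longleftrightarrow>
     (case k of Fwd \<Rightarrow> (a, b) \<in> Ds | Bwd \<Rightarrow> (b, a) \<in> Ds | Bid \<Rightarrow> (a, b) \<in> Bs)"

lemma is_walk_iff_walk_edge:
  "is_walk Ds Bs ns ks \<longleftrightarrow> length ns = Suc (length ks) \<and>
     (\<forall>m<length ks. walk_edge Ds Bs (ks!m) (ns!m) (ns!Suc m))"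
  by (simp add: is_walk_def walk_edge_def)

lemma walk_length: "is_walk Ds Bs ns ks \<Longrightarrow> length ns = Suc (length ks)"
  by (simp add: is_walk_def)

lemma walk_hd_last:
  assumes "is_walk Ds Bs ns ks"
  shows "hd ns = ns!0" "last ns = ns!length ks"
proof -
  have "ns \<noteq> []" "length ns - 1 = length ks" using walk_length[OF assms] by auto
  then show "hd ns = ns!0" "last ns = ns!length ks" by (simp_all add: hd_conv_nth last_conv_nth)
qed

lemma walk_edge_nth:
  "is_walk Ds Bs ns ks \<Longrightarrow> m < length ks \<Longrightarrow> walk_edge Ds Bs (ks!m) (ns!m) (ns!Suc m)"
  by (simp add: is_walk_iff_walk_edge)

lemma is_walk_Cons:
  "is_walk Ds Bs (a # ns) (k # ks) \<longleftrightarrow> is_walk Ds Bs ns ks \<and> walk_edge Ds Bs k a (hd ns)"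
  by (cases ns) (auto simp: is_walk_iff_walk_edge All_less_Suc2)

lemma anc_self: "x \<in> A \<Longrightarrow> x \<in> anc Ds A"
  unfolding anc_def by blast

lemma anc_edge: "(x, y) \<in> Ds \<Longrightarrow> y \<in> anc Ds A \<Longrightarrow> x \<in> anc Ds A"
  unfolding anc_def by (auto intro: converse_rtrancl_into_rtrancl)

lemma anc_insert: "anc Ds (insert a A) = {x. (x, a) \<in> Ds\<^sup>*} \<union> anc Ds A"
  unfolding anc_def by auto

lemma directed_walk_Fwd:
  assumes "(a, b) \<in> Ds\<^sup>*"
  shows "\<exists>ns ks. is_walk Ds Bs ns ks \<and> set ks \<subseteq> {Fwd} \<and> hd ns = a \<and> last ns = b \<and>
    set ns \<subseteq> {z. (a, z) \<in> Ds\<^sup>* \<and> (z, b) \<in> Ds\<^sup>*}"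
  using assms
proof (induction rule: converse_rtrancl_induct)
  case base
  have "is_walk Ds Bs [b] []" by (simp add: is_walk_def)
  then show ?case by fastforce
next
  case (step a y)
  then obtain ns ks where "is_walk Ds Bs ns ks" "set ks \<subseteq> {Fwd}" "hd ns = y" "last ns = b"
    "set ns \<subseteq> {z. (y, z) \<in> Ds\<^sup>* \<and> (z, b) \<in> Ds\<^sup>*}"
    by blast
  moreover from this have "ns \<noteq> []" by (auto dest: walk_length)
  ultimately have "is_walk Ds Bs (a # ns) (Fwd # ks) \<and> set (Fwd # ks) \<subseteq> {Fwd} \<and>
      hd (a # ns) = a \<and> last (a # ns) = b \<and>
      set (a # ns) \<subseteq> {z. (a, z) \<in> Ds\<^sup>* \<and> (z, b) \<in> Ds\<^sup>*}"
    using step by (auto simp: is_walk_Cons walk_edge_def intro: converse_rtrancl_into_rtrancl)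
  then show ?case by blast
qed

lemma directed_walk_Bwd:
  assumes "(a, b) \<in> Ds\<^sup>*"
  shows "\<exists>ns ks. is_walk Ds Bs ns ks \<and> set ks \<subseteq> {Bwd} \<and> hd ns = b \<and> last ns = a \<and>
    set ns \<subseteq> {z. (a, z) \<in> Ds\<^sup>* \<and> (z, b) \<in> Ds\<^sup>*}"
  using assms
proof (induction rule: rtrancl_induct)
  case base
  have "is_walk Ds Bs [a] []" by (simp add: is_walk_def)
  then show ?case by fastforce
next
  case (step y b)
  then obtain ns ks where "is_walk Ds Bs ns ks" "set ks \<subseteq> {Bwd}" "hd ns = y" "last ns = a"
    "set ns \<subseteq> {z. (a, z) \<in> Ds\<^sup>* \<and> (z, y) \<in> Ds\<^sup>*}"
    by blast
  moreover from this have "ns \<noteq> []" by (auto dest: walk_length)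
  ultimately have "is_walk Ds Bs (b # ns) (Bwd # ks) \<and> set (Bwd # ks) \<subseteq> {Bwd} \<and>
      hd (b # ns) = b \<and> last (b # ns) = a \<and>
      set (b # ns) \<subseteq> {z. (a, z) \<in> Ds\<^sup>* \<and> (z, b) \<in> Ds\<^sup>*}"
    using step by (auto simp: is_walk_Cons walk_edge_def intro: rtrancl_into_rtrancl)
  then show ?case by blast
qed

lemma splice_nth:
  assumes "i < length xs" "j < length ys" "xs!i = ys!j"
  shows "k \<le> i \<Longrightarrow> (take (Suc i) xs @ drop (Suc j) ys)!k = xs!k"
    and "i \<le> k \<Longrightarrow> k - i + j < length ys \<Longrightarrow> (take (Suc i) xs @ drop (Suc j) ys)!k = ys!(k - i + j)"
proof -
  show "k \<le> i \<Longrightarrow> (take (Suc i) xs @ drop (Suc j) ys)!k = xs!k"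
    using assms by (simp add: nth_append)
  assume k: "i \<le> k" "k - i + j < length ys"
  show "(take (Suc i) xs @ drop (Suc j) ys)!k = ys!(k - i + j)"
  proof (cases "k = i")
    case False
    then have "Suc j + (k - Suc i) = k - i + j" using k by arith
    then show ?thesis using assms k False by (simp add: nth_append)
  qed (use assms in \<open>simp add: nth_append\<close>)
qed

lemma splice_kinds_nth:
  assumes "i \<le> length ks1" "j \<le> length ks2"
  shows "(take i ks1 @ drop j ks2)!k = (if k < i then ks1!k else ks2!(k - i + j))"
  using assms by (auto simp: nth_append add.commute)

lemma walk_splice:
  assumes w1: "is_walk Ds Bs ns1 ks1" and w2: "is_walk Ds Bs ns2 ks2"
    and ij: "i \<le> length ks1" "j \<le> length ks2" and meet: "ns1!i = ns2!j"
  shows "is_walk Ds Bs (take (Suc i) ns1 @ drop (Suc j) ns2) (take i ks1 @ drop j ks2)"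
  unfolding is_walk_iff_walk_edge
proof (intro conjI allI impI)
  let ?ns = "take (Suc i) ns1 @ drop (Suc j) ns2" and ?ks = "take i ks1 @ drop j ks2"
  have len: "length ns1 = Suc (length ks1)" "length ns2 = Suc (length ks2)"
    using w1 w2 by (simp_all add: walk_length)
  show "length ?ns = Suc (length ?ks)" using len ij by simp
  fix m assume m: "m < length ?ks"
  show "walk_edge Ds Bs (?ks!m) (?ns!m) (?ns!Suc m)"
  proof (cases "m < i")
    case True
    then show ?thesis
      using w1 len ij meet by (simp add: is_walk_iff_walk_edge splice_nth splice_kinds_nth)
  next
    case False
    then have m2: "m - i + j < length ks2" using m ij by auto
    then have "?ks!m = ks2!(m - i + j)" "?ns!m = ns2!(m - i + j)" "?ns!Suc m = ns2!Suc (m - i + j)"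
      using False len ij meet splice_nth(2)[of i ns1 j ns2 "Suc m"] splice_nth(2)[of i ns1 j ns2 m]
      by (auto simp: splice_kinds_nth Suc_diff_le)
    then show ?thesis using w2 m2 by (simp add: is_walk_iff_walk_edge)
  qed
qed

section \<open>A local characterisation of \<sigma>-blocking\<close>

definition edge_before :: "'v list \<Rightarrow> ekind list \<Rightarrow> nat \<Rightarrow> (ekind \<times> 'v) option" where
  "edge_before ns ks k = (if 0 < k then Some (ks!(k - 1), ns!(k - 1)) else None)"

definition edge_after :: "'v list \<Rightarrow> ekind list \<Rightarrow> nat \<Rightarrow> (ekind \<times> 'v) option" where
  "edge_after ns ks k = (if k < length ks then Some (ks!k, ns!Suc k) else None)"

definition collider_at :: "(ekind \<times> 'v) option \<Rightarrow> (ekind \<times> 'v) option \<Rightarrow> bool" where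
  "collider_at l r \<longleftrightarrow>
     map_option fst l \<in> {Some Fwd, Some Bid} \<and> map_option fst r \<in> {Some Bwd, Some Bid}"

definition tail_leaves_scc ::
    "('v \<times> 'v) set \<Rightarrow> (ekind \<times> 'v) option \<Rightarrow> 'v \<Rightarrow> (ekind \<times> 'v) option \<Rightarrow> bool" where
  "tail_leaves_scc Ds l x r \<longleftrightarrow>
     (\<exists>y. l = Some (Bwd, y) \<and> \<not> same_scc Ds x y) \<or> (\<exists>y. r = Some (Fwd, y) \<and> \<not> same_scc Ds x y)"

text \<open>The end-node clause of sigma_blocked is folded into the non-collider case: a node is an end
  node iff one of its neighbours l, r is missing.\<close>

definition locally_open ::
    "('v \<times> 'v) set \<Rightarrow> 'v set \<Rightarrow> (ekind \<times> 'v) option \<Rightarrow> 'v \<Rightarrow> (ekind \<times> 'v) option \<Rightarrow> bool" where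
  "locally_open Ds C l x r \<longleftrightarrow>
     (if collider_at l r then x \<in> anc Ds C
      else x \<in> C \<longrightarrow> l \<noteq> None \<and> r \<noteq> None \<and> \<not> tail_leaves_scc Ds l x r)"

abbreviation open_at :: "('v \<times> 'v) set \<Rightarrow> 'v set \<Rightarrow> 'v list \<Rightarrow> ekind list \<Rightarrow> nat \<Rightarrow> bool" where
  "open_at Ds C ns ks k \<equiv> locally_open Ds C (edge_before ns ks k) (ns!k) (edge_after ns ks k)"

definition sigma_open :: "('v \<times> 'v) set \<Rightarrow> 'v set \<Rightarrow> 'v list \<Rightarrow> ekind list \<Rightarrow> bool" where
  "sigma_open Ds C ns ks \<longleftrightarrow> (\<forall>k<length ns. open_at Ds C ns ks k)"

lemma collider_iff_collider_at:
  "collider ks k \<longleftrightarrow> collider_at (edge_before ns ks k) (edge_after ns ks k)"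
  by (auto simp: collider_def collider_at_def edge_before_def edge_after_def)

lemma sigma_blocked_iff_not_sigma_open:
  assumes len: "length ns = Suc (length ks)"
  shows "sigma_blocked Ds C ns ks \<longleftrightarrow> \<not> sigma_open Ds C ns ks"
proof -
  have "ns \<noteq> []" using len by auto
  then have ends: "hd ns = ns!0" "last ns = ns!length ks"
    using len by (simp_all add: hd_conv_nth last_conv_nth)
  have tails: "tail_leaves_scc Ds (edge_before ns ks k) (ns!k) (edge_after ns ks k) \<longleftrightarrow>
      (k < length ks \<and> ks!k = Fwd \<and> \<not> same_scc Ds (ns!k) (ns!Suc k)) \<or>
      (0 < k \<and> ks!(k - 1) = Bwd \<and> \<not> same_scc Ds (ns!k) (ns!(k - 1)))" for k
    by (auto simp: tail_leaves_scc_def edge_before_def edge_after_def)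
  have missing: "edge_before ns ks k = None \<longleftrightarrow> k = 0"
    "k < length ns \<Longrightarrow> edge_after ns ks k = None \<longleftrightarrow> k = length ks" for k
    using len by (auto simp: edge_before_def edge_after_def)
  have blocking_at: "\<not> open_at Ds C ns ks k \<longleftrightarrow>
      (collider ks k \<and> ns!k \<notin> anc Ds C) \<or>
      (\<not> collider ks k \<and> ns!k \<in> C \<and> (k = 0 \<or> k = length ks \<or>
        (k < length ks \<and> ks!k = Fwd \<and> \<not> same_scc Ds (ns!k) (ns!Suc k)) \<or>
        (0 < k \<and> ks!(k - 1) = Bwd \<and> \<not> same_scc Ds (ns!k) (ns!(k - 1)))))"
    if "k < length ns" for k
    unfolding locally_open_def collider_iff_collider_at[where ns = ns, symmetric] tails
    using missing that by auto
  have "\<not> collider ks 0" "\<not> collider ks (length ks)" "collider ks k \<Longrightarrow> k < length ns" for k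
    using len by (auto simp: collider_def)
  then show ?thesis
    unfolding sigma_blocked_def sigma_open_def ends using blocking_at len
    by (smt (verit) lessI zero_less_Suc)
qed

lemma sigma_sep_iff:
  "sigma_sep Ds Bs a b C \<longleftrightarrow>
     \<not> (\<exists>ns ks. is_walk Ds Bs ns ks \<and> hd ns = a \<and> last ns = b \<and> sigma_open Ds C ns ks)"
  unfolding sigma_sep_def using sigma_blocked_iff_not_sigma_open walk_length by blast

lemma not_sigma_sep_ends:
  assumes "\<not> sigma_sep Ds Bs a b C"
  shows "a \<notin> C" "b \<notin> C"
proof -
  obtain ns ks where "hd ns = a" "last ns = b" "\<not> sigma_blocked Ds C ns ks"
    using assms unfolding sigma_sep_def by blast
  then show "a \<notin> C" "b \<notin> C" unfolding sigma_blocked_def by auto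
qed

lemma locally_open_insert:
  "locally_open Ds C l x r \<Longrightarrow> x \<noteq> X \<Longrightarrow> locally_open Ds (insert X C) l x r"
  by (auto simp: locally_open_def anc_insert)

lemma locally_open_remove:
  "locally_open Ds (insert X C) l x r \<Longrightarrow> (collider_at l r \<Longrightarrow> x \<in> anc Ds C) \<Longrightarrow>
    locally_open Ds C l x r"
  by (auto simp: locally_open_def)

lemma open_at_splice:
  assumes len: "length ns1 = Suc (length ks1)" "length ns2 = Suc (length ks2)"
    and ij: "i \<le> length ks1" "j \<le> length ks2" and meet: "ns1!i = ns2!j"
  defines "ns \<equiv> take (Suc i) ns1 @ drop (Suc j) ns2" and "ks \<equiv> take i ks1 @ drop j ks2"
  shows "k < i \<Longrightarrow> open_at Ds C ns ks k \<longleftrightarrow> open_at Ds C ns1 ks1 k"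
    and "open_at Ds C ns ks i \<longleftrightarrow>
      locally_open Ds C (edge_before ns1 ks1 i) (ns1!i) (edge_after ns2 ks2 j)"
    and "i < k \<Longrightarrow> k - i + j < length ns2 \<Longrightarrow>
      open_at Ds C ns ks k \<longleftrightarrow> open_at Ds C ns2 ks2 (k - i + j)"
proof -
  have nth1: "k \<le> i \<Longrightarrow> ns!k = ns1!k" for k
    unfolding ns_def using len ij meet by (intro splice_nth(1)) auto
  have nth2: "i \<le> k \<Longrightarrow> k - i + j < length ns2 \<Longrightarrow> ns!k = ns2!(k - i + j)" for k
    unfolding ns_def using len ij meet by (intro splice_nth(2)) auto
  have len_ks: "length ks = i + (length ks2 - j)" using ij unfolding ks_def by simp
  have before1: "k \<le> i \<Longrightarrow> edge_before ns ks k = edge_before ns1 ks1 k" for k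
    using ij by (auto simp: edge_before_def ks_def splice_kinds_nth nth1)
  have after1: "k < i \<Longrightarrow> edge_after ns ks k = edge_after ns1 ks1 k" for k
    using ij len_ks by (auto simp: edge_after_def ks_def splice_kinds_nth nth1)
  have after2: "i \<le> k \<Longrightarrow> k - i + j < length ns2 \<Longrightarrow>
      edge_after ns ks k = edge_after ns2 ks2 (k - i + j)" for k
    using ij len len_ks unfolding edge_after_def
    by (auto simp: nth2 Suc_diff_le) (simp_all add: ks_def splice_kinds_nth)
  have before2: "i < k \<Longrightarrow> k - i + j < length ns2 \<Longrightarrow>
      edge_before ns ks k = edge_before ns2 ks2 (k - i + j)" for k
    using ij by (auto simp: edge_before_def ks_def splice_kinds_nth nth2)
  show "k < i \<Longrightarrow> open_at Ds C ns ks k \<longleftrightarrow> open_at Ds C ns1 ks1 k"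
    by (simp add: before1 after1 nth1)
  show "open_at Ds C ns ks i \<longleftrightarrow>
      locally_open Ds C (edge_before ns1 ks1 i) (ns1!i) (edge_after ns2 ks2 j)"
    using len ij by (simp add: before1 after2 nth1)
  show "i < k \<Longrightarrow> k - i + j < length ns2 \<Longrightarrow>
      open_at Ds C ns ks k \<longleftrightarrow> open_at Ds C ns2 ks2 (k - i + j)"
    by (simp add: before2 after2 nth2)
qed

lemma not_sigma_sep_splice:
  assumes w1: "is_walk Ds Bs ns1 ks1" and w2: "is_walk Ds Bs ns2 ks2"
    and ij: "i \<le> length ks1" "j \<le> length ks2" and meet: "ns1!i = ns2!j"
    and before: "\<forall>k<i. open_at Ds C ns1 ks1 k"
    and junction: "locally_open Ds C (edge_before ns1 ks1 i) (ns1!i) (edge_after ns2 ks2 j)"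
    and after: "\<forall>k. j < k \<and> k < length ns2 \<longrightarrow> open_at Ds C ns2 ks2 k"
  shows "\<not> sigma_sep Ds Bs (hd ns1) (last ns2) C"
proof -
  let ?ns = "take (Suc i) ns1 @ drop (Suc j) ns2" and ?ks = "take i ks1 @ drop j ks2"
  have len: "length ns1 = Suc (length ks1)" "length ns2 = Suc (length ks2)"
    using w1 w2 by (simp_all add: walk_length)
  have w: "is_walk Ds Bs ?ns ?ks" using walk_splice[OF w1 w2 ij meet] .
  have "hd ?ns = ?ns!0" "last ?ns = ?ns!(i + (length ks2 - j))"
    using walk_hd_last[OF w] ij by simp_all
  moreover have "?ns!0 = hd ns1" "?ns!(i + (length ks2 - j)) = last ns2"
    using splice_nth[of i ns1 j ns2] len ij meet walk_hd_last[OF w1] walk_hd_last[OF w2] by simp_all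
  moreover have "sigma_open Ds C ?ns ?ks"
    unfolding sigma_open_def
  proof (intro allI impI)
    fix k assume k: "k < length ?ns"
    consider "k < i" | "k = i" | "i < k" by linarith
    then show "open_at Ds C ?ns ?ks k"
    proof cases
      case 3
      then have "j < k - i + j" "k - i + j < length ns2" using k ij len by auto
      then show ?thesis using open_at_splice(3)[OF len ij meet 3] after by blast
    qed (use open_at_splice[OF len ij meet] before junction in auto)
  qed
  ultimately show ?thesis using w unfolding sigma_sep_iff by metis
qed

text \<open>Following tails towards the start of an open walk ends at its first node or at a collider,
  and colliders are ancestors of C.\<close>

lemma sigma_open_Bwd_anc:
  assumes w: "is_walk Ds Bs ns ks" and op: "sigma_open Ds C ns ks"
  shows "0 < k \<Longrightarrow> k < length ns \<Longrightarrow> ks!(k - 1) = Bwd \<Longrightarrow> ns!k \<in> anc Ds (insert (hd ns) C)"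
proof (induction k)
  case (Suc k)
  have len: "length ns = Suc (length ks)" using w by (rule walk_length)
  have "walk_edge Ds Bs (ks!k) (ns!k) (ns!Suc k)"
    using Suc.prems len by (intro walk_edge_nth[OF w]) simp
  then have edge: "(ns!Suc k, ns!k) \<in> Ds" using Suc.prems by (simp add: walk_edge_def)
  consider "k = 0" | "0 < k" "ks!(k - 1) = Bwd" | "0 < k" "ks!(k - 1) \<noteq> Bwd" by blast
  then have "ns!k \<in> anc Ds (insert (hd ns) C)"
  proof cases
    case 1
    then show ?thesis using walk_hd_last(1)[OF w] by (simp add: anc_self)
  next
    case 2
    then show ?thesis using Suc.IH Suc.prems by simp
  next
    case 3
    then have "collider_at (edge_before ns ks k) (edge_after ns ks k)"
      using Suc.prems len
      by (cases "ks!(k - 1)") (simp_all add: collider_at_def edge_before_def edge_after_def)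
    then have "ns!k \<in> anc Ds C"
      using op Suc.prems unfolding sigma_open_def locally_open_def by simp
    then show ?thesis by (simp add: anc_insert)
  qed
  with edge show ?case by (rule anc_edge)
qed simp

lemma sigma_open_Fwd_anc:
  assumes w: "is_walk Ds Bs ns ks" and op: "sigma_open Ds C ns ks"
  shows "k < length ks \<Longrightarrow> ks!k = Fwd \<Longrightarrow> ns!k \<in> anc Ds (insert (last ns) C)"
proof (induction "length ks - k" arbitrary: k)
  case (Suc d)
  have len: "length ns = Suc (length ks)" using w by (rule walk_length)
  have "walk_edge Ds Bs (ks!k) (ns!k) (ns!Suc k)"
    using Suc.prems by (intro walk_edge_nth[OF w])
  then have edge: "(ns!k, ns!Suc k) \<in> Ds" using Suc.prems by (simp add: walk_edge_def)
  consider "Suc k = length ks" | "Suc k < length ks" "ks!Suc k = Fwd"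
    | "Suc k < length ks" "ks!Suc k \<noteq> Fwd"
    using Suc.prems by linarith
  then have "ns!Suc k \<in> anc Ds (insert (last ns) C)"
  proof cases
    case 1
    then show ?thesis using walk_hd_last(2)[OF w] by (simp add: anc_self)
  next
    case 2
    moreover have "d = length ks - Suc k" using Suc.hyps(2) by simp
    ultimately show ?thesis using Suc.hyps(1) by blast
  next
    case 3
    then have "collider_at (edge_before ns ks (Suc k)) (edge_after ns ks (Suc k))"
      using Suc.prems
      by (cases "ks!Suc k") (simp_all add: collider_at_def edge_before_def edge_after_def)
    then have "ns!Suc k \<in> anc Ds C"
      using op 3 len unfolding sigma_open_def locally_open_def by simp
    then show ?thesis by (simp add: anc_insert)
  qed
  with edge show ?case by (rule anc_edge)
qed simp

lemma Bwd_walk_avoiding_open: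
  assumes w: "is_walk Ds Bs ns ks" and bwd: "set ks \<subseteq> {Bwd}"
    and avoids: "set ns \<inter> C = {}" and k: "k < length ns"
  shows "locally_open Ds C (edge_before ns ks k) (ns!k) r"
proof -
  have "\<forall>m<length ks. ks!m = Bwd" using bwd by (auto simp: set_conv_nth)
  then have "0 < k \<Longrightarrow> ks!(k - 1) = Bwd" using k walk_length[OF w] by simp
  then have "\<not> collider_at (edge_before ns ks k) r" by (auto simp: collider_at_def edge_before_def)
  moreover have "ns!k \<notin> C" using avoids nth_mem[OF k] by blast
  ultimately show ?thesis by (simp add: locally_open_def)
qed

lemma Fwd_walk_in_scc_open:
  assumes w: "is_walk Ds Bs ns ks" and fwd: "set ks \<subseteq> {Fwd}"
    and scc: "\<forall>z\<in>set ns. \<forall>z'\<in>set ns. same_scc Ds z z'"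
    and k: "0 < k" "k < length ns" and end_open: "last ns \<notin> C"
  shows "open_at Ds C ns ks k"
proof -
  have len: "length ns = Suc (length ks)" using w by (rule walk_length)
  have kinds: "\<forall>m<length ks. ks!m = Fwd" using fwd by (auto simp: set_conv_nth)
  have not_collider: "\<not> collider_at (edge_before ns ks k) (edge_after ns ks k)"
    using kinds k by (simp add: collider_at_def edge_after_def)
  show ?thesis
  proof (cases "k < length ks")
    case True
    then have "same_scc Ds (ns!k) (ns!Suc k)" using scc len by simp
    then show ?thesis using not_collider True k kinds len
      by (simp add: locally_open_def tail_leaves_scc_def edge_before_def edge_after_def)
  next
    case False
    then have "k = length ks" using k len by simp
    then have "ns!k = last ns" using walk_hd_last(2)[OF w] by simp
    with not_collider end_open show ?thesis by (simp add: locally_open_def)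
  qed
qed

section \<open>Conditioning on one more node\<close>

lemma last_collider_outside_anc:
  assumes op: "sigma_open Ds (insert X C) ns ks" and not_op: "\<not> sigma_open Ds C ns ks"
  obtains c where "c < length ns" "ns!c \<notin> anc Ds C" "ns!c \<in> anc Ds (insert X C)"
    "\<forall>k. c < k \<and> k < length ns \<longrightarrow> open_at Ds C ns ks k"
proof -
  define K where "K = {k. k < length ns \<and> collider_at (edge_before ns ks k) (edge_after ns ks k) \<and>
    ns!k \<notin> anc Ds C}"
  have open_outside_K: "open_at Ds C ns ks k" if k: "k < length ns" "k \<notin> K" for k
  proof (rule locally_open_remove)
    show "open_at Ds (insert X C) ns ks k" using op k(1) unfolding sigma_open_def by blast
    show "ns!k \<in> anc Ds C" if "collider_at (edge_before ns ks k) (edge_after ns ks k)"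
      using k that unfolding K_def by blast
  qed
  then obtain k0 where "k0 \<in> K" using not_op unfolding sigma_open_def by blast
  moreover have "finite K" unfolding K_def by simp
  ultimately have c: "Max K \<in> K" "\<forall>k\<in>K. k \<le> Max K" using Max_in by auto
  then have "ns!Max K \<in> anc Ds (insert X C)"
    using op unfolding K_def sigma_open_def locally_open_def by simp
  moreover have "\<forall>k. Max K < k \<and> k < length ns \<longrightarrow> open_at Ds C ns ks k"
    using c(2) open_outside_K by (meson not_le)
  ultimately show thesis using that c(1) unfolding K_def by blast
qed

lemma unblocking_node_not_anc:
  assumes sep: "sigma_sep Ds Bs a b C" and unsep: "\<not> sigma_sep Ds Bs a b (insert X C)"
  shows "X \<notin> anc Ds (insert a C)"
proof -
  obtain ns ks where w: "is_walk Ds Bs ns ks" "hd ns = a" "last ns = b"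
    and op: "sigma_open Ds (insert X C) ns ks"
    using unsep unfolding sigma_sep_iff by blast
  have "\<not> sigma_open Ds C ns ks" using sep w unfolding sigma_sep_iff by blast
  then obtain c where c: "c < length ns" "ns!c \<notin> anc Ds C" "ns!c \<in> anc Ds (insert X C)"
    and after: "\<forall>k. c < k \<and> k < length ns \<longrightarrow> open_at Ds C ns ks k"
    using last_collider_outside_anc[OF op] by blast
  have cX: "(ns!c, X) \<in> Ds\<^sup>*" using c(2,3) by (simp add: anc_insert)
  then have "X \<notin> anc Ds C" using c(2) by (auto simp: anc_def intro: rtrancl_trans)
  moreover have "(X, a) \<notin> Ds\<^sup>*"
  proof
    assume "(X, a) \<in> Ds\<^sup>*"
    with cX have "(ns!c, a) \<in> Ds\<^sup>*" by (rule rtrancl_trans)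
    then obtain ps pks where p: "is_walk Ds Bs ps pks" "set pks \<subseteq> {Bwd}" "hd ps = a" "last ps = ns!c"
      and desc: "set ps \<subseteq> {z. (ns!c, z) \<in> Ds\<^sup>* \<and> (z, a) \<in> Ds\<^sup>*}"
      using directed_walk_Bwd[of "ns!c" a Ds Bs] by blast
    have "set ps \<inter> C = {}" using desc c(2) by (auto simp: anc_def)
    then have open_p: "locally_open Ds C (edge_before ps pks k) (ps!k) r" if "k < length ps" for k r
      using Bwd_walk_avoiding_open[OF p(1,2)] that by blast
    have "\<not> sigma_sep Ds Bs (hd ps) (last ns) C"
    proof (rule not_sigma_sep_splice[OF p(1) w(1) order_refl])
      show "c \<le> length ks" "ps!length pks = ns!c"
        using c(1) walk_length[OF w(1)] walk_hd_last(2)[OF p(1)] p(4) by simp_all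
    qed (use open_p after walk_length[OF p(1)] in auto)
    with sep show False using p(3) w(3) by simp
  qed
  ultimately show ?thesis by (simp add: anc_insert)
qed

lemma separator_on_open_walk:
  assumes w: "is_walk Ds Bs ns ks" and op: "sigma_open Ds C ns ks"
    and sep: "sigma_sep Ds Bs (hd ns) (last ns) (insert X C)"
  shows "X \<in> set ns"
proof (rule ccontr)
  assume "X \<notin> set ns"
  then have "sigma_open Ds (insert X C) ns ks"
    using op locally_open_insert unfolding sigma_open_def by (metis nth_mem)
  with w sep show False unfolding sigma_sep_iff by blast
qed

lemma first_visit_arrowhead:
  assumes w: "is_walk Ds Bs ns ks" and op: "sigma_open Ds C ns ks"
    and X: "X \<in> set ns" and not_anc: "X \<notin> anc Ds (insert (hd ns) C)"
  obtains i where "0 < i" "i < length ns" "ns!i = X" "\<forall>k<i. ns!k \<noteq> X" "ks!(i - 1) \<noteq> Bwd"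
proof -
  obtain i where i: "i < length ns" "ns!i = X" and first: "\<forall>k<i. ns!k \<noteq> X"
    using X exists_least_iff[of "\<lambda>i. i < length ns \<and> ns!i = X"]
    by (metis in_set_conv_nth order.strict_trans)
  have "X \<noteq> hd ns" using not_anc by (auto simp: anc_def)
  then have "0 < i" using i walk_hd_last(1)[OF w] by (cases i) auto
  moreover have "ks!(i - 1) \<noteq> Bwd"
    using sigma_open_Bwd_anc[OF w op \<open>0 < i\<close> i(1)] i(2) not_anc by auto
  ultimately show thesis using that i first by blast
qed

lemma last_visit_arrowhead:
  assumes w: "is_walk Ds Bs ns ks" and op: "sigma_open Ds C ns ks"
    and X: "X \<in> set ns" and not_anc: "X \<notin> anc Ds (insert (last ns) C)"
  obtains j where "j < length ks" "ns!j = X" "\<forall>k. j < k \<and> k < length ns \<longrightarrow> ns!k \<noteq> X"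
    "ks!j \<noteq> Fwd"
proof -
  define J where "J = {k. k < length ns \<and> ns!k = X}"
  have "finite J" "J \<noteq> {}" using X unfolding J_def by (auto simp: in_set_conv_nth)
  then have j: "Max J < length ns" "ns!Max J = X" and last_visit: "\<forall>k\<in>J. k \<le> Max J"
    using Max_in[of J] unfolding J_def by auto
  have "X \<noteq> last ns" using not_anc by (auto simp: anc_def)
  then have "Max J \<noteq> length ks" using j(2) walk_hd_last(2)[OF w] by auto
  then have "Max J < length ks" using j(1) walk_length[OF w] by simp
  moreover have "ks!Max J \<noteq> Fwd"
    using sigma_open_Fwd_anc[OF w op \<open>Max J < length ks\<close>] j(2) not_anc by auto
  moreover have "\<forall>k. Max J < k \<and> k < length ns \<longrightarrow> ns!k \<noteq> X"
    using last_visit unfolding J_def by (auto simp: not_le[symmetric])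
  ultimately show thesis using that j(2) by blast
qed

text \<open>At the junction X is a collider, unless the continuation leaves X by a directed edge; that
  edge then stays in the strongly connected component of X and X does not block.\<close>

lemma reroute_at_first_visit:
  assumes w: "is_walk Ds Bs ns ks" and op: "sigma_open Ds C ns ks"
    and i: "0 < i" "i < length ns" "ns!i = X" "\<forall>k<i. ns!k \<noteq> X" "ks!(i - 1) \<noteq> Bwd"
    and w': "is_walk Ds Bs ns' ks'" "j < length ks'" "ns'!j = X"
    and stays_in_scc: "ks'!j = Fwd \<Longrightarrow> same_scc Ds X (ns'!Suc j)"
    and after: "\<forall>k. j < k \<and> k < length ns' \<longrightarrow> open_at Ds (insert X C) ns' ks' k"
  shows "\<not> sigma_sep Ds Bs (hd ns) (last ns') (insert X C)"
proof (rule not_sigma_sep_splice[OF w w'(1) _ _ _ _ _ after])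
  show "i \<le> length ks" using i(2) walk_length[OF w] by simp
  show "j \<le> length ks'" "ns!i = ns'!j" using w'(2,3) i(3) by simp_all
  show "\<forall>k<i. open_at Ds (insert X C) ns ks k"
    using op i(2,4) unfolding sigma_open_def by (auto intro: locally_open_insert)
  have "X \<in> anc Ds (insert X C)" by (simp add: anc_self)
  then show "locally_open Ds (insert X C) (edge_before ns ks i) (ns!i) (edge_after ns' ks' j)"
    using i(1,3,5) w'(2) stays_in_scc
    by (cases "ks'!j") (auto simp: locally_open_def collider_at_def tail_leaves_scc_def
        edge_before_def edge_after_def)
qed

lemma minimal_separator_walk:
  assumes sep: "sigma_sep Ds Bs a b (insert X C)" and unsep: "\<not> sigma_sep Ds Bs a b C"
    and not_anc: "X \<notin> anc Ds (insert a C)"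
  obtains ns ks i where "is_walk Ds Bs ns ks" "hd ns = a" "last ns = b" "sigma_open Ds C ns ks"
    "0 < i" "i < length ns" "ns!i = X" "\<forall>k<i. ns!k \<noteq> X" "ks!(i - 1) \<noteq> Bwd"
proof -
  obtain ns ks where w: "is_walk Ds Bs ns ks" "hd ns = a" "last ns = b"
    and op: "sigma_open Ds C ns ks"
    using unsep unfolding sigma_sep_iff by blast
  have "X \<in> set ns" using separator_on_open_walk[OF w(1) op] sep w(2,3) by simp
  with not_anc w(2) obtain i where
    "0 < i" "i < length ns" "ns!i = X" "\<forall>k<i. ns!k \<noteq> X" "ks!(i - 1) \<noteq> Bwd"
    using first_visit_arrowhead[OF w(1) op] by blast
  with w op show thesis by (rule that)
qed

lemma minimal_separator_anc:
  assumes sep: "sigma_sep Ds Bs a b (insert X C)" and unsep: "\<not> sigma_sep Ds Bs a b C"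
    and not_anc: "X \<notin> anc Ds (insert a C)"
  shows "X \<in> anc Ds {b}"
proof (rule ccontr)
  assume "X \<notin> anc Ds {b}"
  with not_anc have not_anc_b: "X \<notin> anc Ds (insert b C)" by (simp add: anc_insert)
  obtain ns ks i where w: "is_walk Ds Bs ns ks" "hd ns = a" "last ns = b"
    and op: "sigma_open Ds C ns ks"
    and i: "0 < i" "i < length ns" "ns!i = X" "\<forall>k<i. ns!k \<noteq> X" "ks!(i - 1) \<noteq> Bwd"
    using minimal_separator_walk[OF sep unsep not_anc] by blast
  have "X \<in> set ns" using i(2,3) nth_mem by blast
  then obtain j where j: "j < length ks" "ns!j = X" "\<forall>k. j < k \<and> k < length ns \<longrightarrow> ns!k \<noteq> X"
    "ks!j \<noteq> Fwd"
    using last_visit_arrowhead[OF w(1) op] not_anc_b w(3) by metis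
  have "\<forall>k. j < k \<and> k < length ns \<longrightarrow> open_at Ds (insert X C) ns ks k"
    using op j(3) unfolding sigma_open_def by (auto intro: locally_open_insert)
  then have "\<not> sigma_sep Ds Bs (hd ns) (last ns) (insert X C)"
    using reroute_at_first_visit[OF w(1) op i w(1) j(1,2)] j(4) by blast
  with sep w(2,3) show False by simp
qed

lemma minimal_separator_not_desc:
  assumes sep: "sigma_sep Ds Bs a b (insert X C)" and unsep: "\<not> sigma_sep Ds Bs a b C"
    and not_anc: "X \<notin> anc Ds (insert a C)" and "X \<noteq> b"
  shows "b \<notin> anc Ds {X}"
proof
  assume "b \<in> anc Ds {X}"
  then have bX: "(b, X) \<in> Ds\<^sup>*" by (simp add: anc_def)
  have "(X, b) \<in> Ds\<^sup>*" using minimal_separator_anc[OF sep unsep not_anc] by (simp add: anc_def)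
  then obtain ps pks where p: "is_walk Ds Bs ps pks" "set pks \<subseteq> {Fwd}" "hd ps = X" "last ps = b"
    and between: "set ps \<subseteq> {z. (X, z) \<in> Ds\<^sup>* \<and> (z, b) \<in> Ds\<^sup>*}"
    using directed_walk_Fwd[of X b Ds Bs] by blast
  have scc: "\<forall>z\<in>set ps. \<forall>z'\<in>set ps. same_scc Ds z z'"
    using between bX unfolding same_scc_def by (blast intro: rtrancl_trans)
  have "pks \<noteq> []" using p(1,3,4) \<open>X \<noteq> b\<close> walk_hd_last[OF p(1)] by auto
  have "b \<notin> insert X C" using not_sigma_sep_ends[OF unsep] \<open>X \<noteq> b\<close> by simp
  obtain ns ks i where w: "is_walk Ds Bs ns ks" "hd ns = a" "last ns = b"
    and op: "sigma_open Ds C ns ks"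
    and i: "0 < i" "i < length ns" "ns!i = X" "\<forall>k<i. ns!k \<noteq> X" "ks!(i - 1) \<noteq> Bwd"
    using minimal_separator_walk[OF sep unsep not_anc] by blast
  have "\<not> sigma_sep Ds Bs (hd ns) (last ps) (insert X C)"
  proof (rule reroute_at_first_visit[OF w(1) op i p(1)])
    show "0 < length pks" "ps!0 = X" using \<open>pks \<noteq> []\<close> p(3) walk_hd_last(1)[OF p(1)] by auto
    show "same_scc Ds X (ps!Suc 0)"
      using scc \<open>ps!0 = X\<close> \<open>0 < length pks\<close> walk_length[OF p(1)] by (metis Suc_mono nth_mem zero_less_Suc)
    show "\<forall>k. 0 < k \<and> k < length ps \<longrightarrow> open_at Ds (insert X C) ps pks k"
      using Fwd_walk_in_scc_open[OF p(1,2) scc] p(4) \<open>b \<notin> insert X C\<close> by blast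
  qed
  with sep w(2) p(4) show False by simp
qed

lemma minimal_separator_no_bidirected:
  assumes sep: "sigma_sep Ds Bs a b (insert X C)" and unsep: "\<not> sigma_sep Ds Bs a b C"
    and not_anc: "X \<notin> anc Ds (insert a C)" and "X \<noteq> b"
  shows "(X, b) \<notin> Bs"
proof
  assume "(X, b) \<in> Bs"
  then have edge: "is_walk Ds Bs [X, b] [Bid]" by (simp add: is_walk_def)
  have "b \<notin> insert X C" using not_sigma_sep_ends[OF unsep] \<open>X \<noteq> b\<close> by simp
  obtain ns ks i where w: "is_walk Ds Bs ns ks" "hd ns = a" "last ns = b"
    and op: "sigma_open Ds C ns ks"
    and i: "0 < i" "i < length ns" "ns!i = X" "\<forall>k<i. ns!k \<noteq> X" "ks!(i - 1) \<noteq> Bwd"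
    using minimal_separator_walk[OF sep unsep not_anc] by blast
  have "\<not> sigma_sep Ds Bs (hd ns) (last [X, b]) (insert X C)"
    by (rule reroute_at_first_visit[OF w(1) op i edge])
      (use \<open>b \<notin> insert X C\<close> in \<open>auto simp: locally_open_def collider_at_def edge_before_def
        edge_after_def\<close>)
  with sep w(2) show False by simp
qed

theorem proposition3:
  fixes Vs :: "'v set" and Ds Bs :: "('v \<times> 'v) set"
    and indep :: "'v \<Rightarrow> 'v \<Rightarrow> 'v set \<Rightarrow> bool"
    and S :: "'v set" and V W X Y :: 'v
  assumes G: "dmg Vs Ds Bs"
    and faithful: "\<And>a b C. a \<in> Vs \<Longrightarrow> b \<in> Vs \<Longrightarrow> C \<subseteq> Vs \<Longrightarrow> a \<noteq> b \<Longrightarrow>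
                      a \<notin> C \<Longrightarrow> b \<notin> C \<Longrightarrow> indep a b C \<longleftrightarrow> sigma_sep Ds Bs a b C"
    and S_sub: "S \<subseteq> Vs"
    and in_V: "V \<in> Vs" "W \<in> Vs" "X \<in> Vs" "Y \<in> Vs"
    and notS: "V \<notin> S" "W \<notin> S" "X \<notin> S" "Y \<notin> S"
    and distinct: "distinct [V, W, X, Y]"
    and ci1: "indep V Y (S \<union> {X})" "\<not> indep V Y S"
    and ci2: "\<not> indep V W (S \<union> {X})" "indep V W S"
  shows "X \<in> anc Ds {Y} \<and> Y \<notin> anc Ds {X} \<and> X \<notin> anc Ds S \<and> (X, Y) \<notin> Bs"
proof -
  have SX: "S \<union> {X} = insert X S" "insert X S \<subseteq> Vs" using S_sub in_V by auto
  have neq: "V \<noteq> W" "V \<noteq> X" "V \<noteq> Y" "W \<noteq> X" "X \<noteq> Y" using distinct by auto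
  have sepY: "sigma_sep Ds Bs V Y (insert X S)"
    using faithful[of V Y "insert X S"] ci1(1) in_V notS neq SX by auto
  have unsepY: "\<not> sigma_sep Ds Bs V Y S"
    using faithful[of V Y S] ci1(2) in_V notS neq S_sub by auto
  have sepW: "sigma_sep Ds Bs V W S"
    using faithful[of V W S] ci2(2) in_V notS neq S_sub by auto
  have unsepW: "\<not> sigma_sep Ds Bs V W (insert X S)"
    using faithful[of V W "insert X S"] ci2(1) in_V notS neq SX by auto
  have not_anc: "X \<notin> anc Ds (insert V S)" using unblocking_node_not_anc[OF sepW unsepW] .
  then show ?thesis
    using minimal_separator_anc[OF sepY unsepY not_anc]
      minimal_separator_not_desc[OF sepY unsepY not_anc \<open>X \<noteq> Y\<close>]
      minimal_separator_no_bidirected[OF sepY unsepY not_anc \<open>X \<noteq> Y\<close>]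
    by (simp add: anc_insert)
qed

end
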